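(* Let $\beta\in(-2,-1)$ and $c\in(0,1)$. For integers $n\ge 3$ let $x_{1,n}<\dots<x_{n,n}$ denote the zeros of the monic Meixner polynomial $M_n(x;\beta,c)$ (when real), let $y_{1,n}<\dots<y_{n,n}$ denote the zeros of $M_n(x;\beta+2,c)$, and put $A_n=\frac{\beta}{c-1}-\beta-n-1$. (a) If $n\geq \frac{\beta}{c-1}-(\beta+1)$, then $A_n\leq 0$ and $$x_{1,n}<y_{1,n}<x_{2,n}<y_{2,n}<\dots<x_{n,n}<y_{n,n}.$$ (b) There is at most one integer $n^*$ with $\frac{\beta}{c-1}-(\beta+2)<n^*<\frac{\beta}{c-1}-(\beta+1)$, and for such $n^*$ one has $0<A_{n^*}<1$. If moreover $n^*\in\left(\frac{\beta}{c-1},\frac{\beta}{c-1}-(\beta+1)\right)$, then the zeros of $M_{n^*}(x;\beta,c)$ and $M_{n^*}(x;\beta+2,c)$ satisfy $x_{1,n^*}<y_{1,n^*}<x_{2,n^*}<y_{2,n^*}<\dots<x_{n^*,n^*}<y_{n^*,n^*}$ if and only if $A_{n^*}<y_{1,n^*}$.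
   Context: Monic Meixner polynomials are defined by $$M_n(x;\beta,c)=\left(\frac{c}{c-1}\right)^n(\beta)_n\sum_{k=0}^{n}\frac{(-n)_k(-x)_k(1-\frac1c)^k}{(\beta)_k\,k!},$$ for real $\beta,c$ with $c\neq 0$ and $\beta\notin\{-1,-2,\dots,-n+1\}$, where $(\alpha)_0=1$ and $(\alpha)_k=\alpha(\alpha+1)\cdots(\alpha+k-1)$ for $k\geq1$. For $\beta+2>0$ and $c\in(0,1)$ the polynomials $M_n(x;\beta+2,c)$ are orthogonal and have real, simple, positive zeros; for $\beta\in(-2,-1)$, $c\in(0,1)$ and $n>\frac{\beta}{c-1}$, the zeros of $M_n(x;\beta,c)$ are real, simple and positive. *)

theory Defs
  imports Complex_Main
begin

definition meixner :: "nat \<Rightarrow> real \<Rightarrow> real \<Rightarrow> real \<Rightarrow> real" where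
  "meixner n \<beta> c x =
     (c / (c - 1)) ^ n * pochhammer \<beta> n *
     (\<Sum>k = 0..n. pochhammer (- real n) k * pochhammer (- x) k * (1 - 1 / c) ^ k
                    / (pochhammer \<beta> k * fact k))"

definition meixner_zeros :: "nat \<Rightarrow> real \<Rightarrow> real \<Rightarrow> real set" where
  "meixner_zeros n \<beta> c = {x. meixner n \<beta> c x = 0}"

text \<open>Increasingly ordered list of the real zeros: entry i is x_{i+1,n}.\<close>
definition zero_list :: "nat \<Rightarrow> real \<Rightarrow> real \<Rightarrow> real list" where
  "zero_list n \<beta> c = sorted_list_of_set (meixner_zeros n \<beta> c)"

definition interlace :: "nat \<Rightarrow> real list \<Rightarrow> real list \<Rightarrow> bool" where
  "interlace n xs ys \<longleftrightarrow> length xs = n \<and> length ys = n \<and>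
     (\<forall>i<n. xs ! i < ys ! i) \<and> (\<forall>i. i + 1 < n \<longrightarrow> ys ! i < xs ! (i + 1))"

definition A_n :: "real \<Rightarrow> real \<Rightarrow> real \<Rightarrow> real" where
  "A_n \<beta> c n = \<beta> / (c - 1) - \<beta> - n - 1"

end

theory Submission
  imports Defs "HOL-Computational_Algebra.Polynomial"
begin

(* For b > 0 and 0 < c < 1 the monic Meixner polynomials M_n(x;b,c) satisfy a three-term
   recurrence with positive recurrence coefficients, so the zeros y_1 < ... < y_n of
   M_n(x;beta+2,c) are real, simple and positive, and M_{n-1}(x;beta+2,c) alternates in sign
   along them.  Two contiguous relations in the parameter (beta -> beta+1 -> beta+2) combined
   with that recurrence give, at every zero y of M_n(x;beta+2,c),
     (n + beta) M_n(y;beta,c) = n c (y - A_n) M_{n-1}(y;beta+2,c).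
   Hence M_n(x;beta,c) alternates in sign along 0 < y_1 < ... < y_n exactly when A_n < y_1,
   which puts one zero of M_n(x;beta,c) into each of (0,y_1), (y_1,y_2), ..., (y_{n-1},y_n);
   conversely, interlacing fixes the sign of M_n(y_1;beta,c) and forces A_n < y_1.
   For n >= beta/(c-1) - (beta+1) one has A_n <= 0 < y_1. *)

subsection \<open>Real polynomials with simple real zeros\<close>

definition sorted_roots :: "real poly \<Rightarrow> real list" where
  "sorted_roots p = sorted_list_of_set {x. poly p x = 0}"

lemma
  assumes "p \<noteq> 0"
  shows set_sorted_roots: "set (sorted_roots p) = {x. poly p x = 0}"
    and length_sorted_roots: "length (sorted_roots p) = card {x. poly p x = 0}"
  using poly_roots_finite[OF assms] by (simp_all add: sorted_roots_def)

lemma sorted_roots_strict_sorted: "sorted_wrt (<) (sorted_roots p)"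
  by (simp add: sorted_roots_def)

(* p minus the product of its linear factors has degree below degree p and vanishes at
   degree p points. *)
lemma poly_eq_prod_roots:
  fixes p :: "real poly"
  assumes lc: "lead_coeff p = 1" and card: "card {x. poly p x = 0} = degree p"
  shows "poly p y = (\<Prod>r | poly p r = 0. y - r)"
proof -
  define R where "R = {x. poly p x = 0}"
  define q where "q = (\<Prod>r\<in>R. [:- r, 1:])"
  have "p \<noteq> 0" using lc by auto
  then have fin: "finite R" unfolding R_def by (rule poly_roots_finite)
  have deg_q: "degree q = degree p"
    using card by (simp add: q_def R_def degree_prod_eq_sum_degree)
  have lc_q: "lead_coeff q = 1" by (simp add: q_def lead_coeff_prod)
  have "p = q"
  proof (rule ccontr)
    assume "p \<noteq> q"
    then have "p - q \<noteq> 0" by simp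
    have "degree (p - q) < degree p"
      using degree_diff_le[of p "degree p" q] deg_q lc lc_q \<open>p - q \<noteq> 0\<close>
      by (metis coeff_diff diff_self le_neq_implies_less le_refl leading_coeff_0_iff)
    moreover have "R \<subseteq> {x. poly (p - q) x = 0}"
      using fin by (auto simp: R_def q_def poly_prod)
    then have "degree p \<le> card {x. poly (p - q) x = 0}"
      using card card_mono[OF poly_roots_finite[OF \<open>p - q \<noteq> 0\<close>]] unfolding R_def by metis
    ultimately show False
      using card_poly_roots_bound[OF \<open>p - q \<noteq> 0\<close>] by linarith
  qed
  then have "poly p y = poly q y" by simp
  also have "\<dots> = (\<Prod>r\<in>R. y - r)" by (simp add: q_def poly_prod)
  finally show ?thesis by (simp add: R_def)
qed

lemma sign_poly_between_roots:
  fixes p :: "real poly"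
  assumes lc: "lead_coeff p = 1" and split: "length (sorted_roots p) = degree p"
    and i: "i \<le> degree p"
    and below: "0 < i \<Longrightarrow> sorted_roots p ! (i - 1) < y"
    and above: "i < degree p \<Longrightarrow> y < sorted_roots p ! i"
  shows "(-1) ^ (degree p - i) * poly p y > 0"
proof -
  define rs where "rs = sorted_roots p"
  define A where "A = set (take i rs)"
  define B where "B = set (drop i rs)"
  have "p \<noteq> 0" using lc by auto
  have sorted: "sorted rs" and dist: "distinct rs"
    using sorted_roots_strict_sorted[of p] by (simp_all add: rs_def strict_sorted_iff)
  have card: "card {x. poly p x = 0} = degree p"
    using split length_sorted_roots[OF \<open>p \<noteq> 0\<close>] by simp
  have roots: "{x. poly p x = 0} = A \<union> B" "A \<inter> B = {}"
    using set_sorted_roots[OF \<open>p \<noteq> 0\<close>] set_take_disj_set_drop_if_distinct[OF dist]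
    by (simp_all add: A_def B_def rs_def flip: set_append)
  have A_below: "r < y" if "r \<in> A" for r
  proof -
    obtain k where "k < i" "k < length rs" "r = rs ! k"
      using \<open>r \<in> A\<close> by (auto simp: A_def in_set_conv_nth)
    then have "r \<le> rs ! (i - 1)" using sorted i split by (simp add: sorted_nth_mono rs_def)
    then show ?thesis using below \<open>k < i\<close> by (simp add: rs_def)
  qed
  have B_above: "y < r" if "r \<in> B" for r
  proof -
    obtain k where "k < length rs - i" "r = rs ! (i + k)"
      using \<open>r \<in> B\<close> by (auto simp: B_def in_set_conv_nth)
    then have "rs ! i \<le> r" using sorted by (simp add: sorted_nth_mono)
    moreover have "y < rs ! i" using above \<open>k < length rs - i\<close> split by (simp add: rs_def)
    ultimately show ?thesis by simp
  qed
  have card_B: "card B = degree p - i"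
    using dist split by (simp add: B_def distinct_card rs_def)
  have "poly p y = (\<Prod>r\<in>A. y - r) * (\<Prod>r\<in>B. y - r)"
    using poly_eq_prod_roots[OF lc card, of y] roots by (simp add: A_def B_def prod.union_disjoint)
  also have "(\<Prod>r\<in>B. y - r) = (-1) ^ (degree p - i) * (\<Prod>r\<in>B. r - y)"
    using prod_uminus[of "\<lambda>r. r - y" B] by (simp add: card_B)
  finally have "(-1) ^ (degree p - i) * poly p y = (\<Prod>r\<in>A. y - r) * (\<Prod>r\<in>B. r - y)"
    by (simp add: mult_ac)
  also have "\<dots> > 0"
    using A_below B_above by (intro mult_pos_pos prod_pos) auto
  finally show ?thesis .
qed

lemma sorted_roots_eqI:
  fixes p :: "real poly"
  assumes "p \<noteq> 0" "degree p = length zs" "sorted_wrt (<) zs" "\<And>z. z \<in> set zs \<Longrightarrow> poly p z = 0"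
  shows "sorted_roots p = zs"
proof -
  have "set zs \<subseteq> {x. poly p x = 0}" using assms(4) by blast
  moreover have "card {x. poly p x = 0} \<le> card (set zs)"
    using card_poly_roots_bound[OF assms(1)] assms(2,3) distinct_card[of zs]
    by (simp add: strict_sorted_iff)
  ultimately have "{x. poly p x = 0} = set zs"
    using card_seteq[OF poly_roots_finite[OF assms(1)]] by blast
  then show ?thesis
    using assms(3)
    by (simp add: sorted_roots_def strict_sorted_iff sorted_list_of_set_sort_remdups
        distinct_remdups_id sorted_sort_id)
qed

lemma sorted_roots_between_sign_changes:
  fixes p :: "real poly" and ts :: "real list"
  assumes deg: "degree p = N" and len: "length ts = Suc N" and sorted: "sorted_wrt (<) ts"
    and sign: "\<And>i. i \<le> N \<Longrightarrow> (-1) ^ (N - i) * poly p (ts ! i) > 0"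
  shows "length (sorted_roots p) = N"
    and "\<And>i. i < N \<Longrightarrow> ts ! i < sorted_roots p ! i \<and> sorted_roots p ! i < ts ! Suc i"
proof -
  have "\<exists>z. ts ! i < z \<and> z < ts ! Suc i \<and> poly p z = 0" if "i < N" for i
  proof -
    obtain k where k: "N - i = Suc k" "N - Suc i = k" using \<open>i < N\<close> by (metis Suc_diff_Suc)
    have "0 < (-1) ^ Suc k * poly p (ts ! i)" using sign[of i] \<open>i < N\<close> k(1) by (metis less_imp_le)
    moreover have "0 < (-1) ^ k * poly p (ts ! Suc i)" using sign[of "Suc i"] \<open>i < N\<close> k(2) by (metis Suc_leI)
    ultimately have "0 < ((-1) ^ Suc k * poly p (ts ! i)) * ((-1) ^ k * poly p (ts ! Suc i))"
      by (rule mult_pos_pos)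
    also have "\<dots> = - (poly p (ts ! i) * poly p (ts ! Suc i))"
      by (simp flip: power_add)
    finally have "poly p (ts ! i) * poly p (ts ! Suc i) < 0" by simp
    moreover have "ts ! i < ts ! Suc i" using sorted len \<open>i < N\<close> by (simp add: sorted_wrt_nth_less)
    ultimately show ?thesis using poly_IVT by blast
  qed
  then obtain z where z: "\<And>i. i < N \<Longrightarrow> ts ! i < z i \<and> z i < ts ! Suc i \<and> poly p (z i) = 0"
    by metis
  have "z i < z j" if "i < j" "j < N" for i j
  proof -
    have "ts ! Suc i \<le> ts ! j"
      using sorted len that by (cases "Suc i = j") (simp_all add: sorted_wrt_nth_less less_imp_le)
    then show ?thesis using z[of i] z[of j] that by fastforce
  qed
  then have "sorted_roots p = map z [0..<N]"
    using sign[of 0] z deg by (intro sorted_roots_eqI) (auto simp: sorted_wrt_iff_nth_less)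
  then show "length (sorted_roots p) = N"
    and "\<And>i. i < N \<Longrightarrow> ts ! i < sorted_roots p ! i \<and> sorted_roots p ! i < ts ! Suc i"
    using z by simp_all
qed

lemma poly_pos_beyond:
  fixes p :: "real poly"
  assumes "lead_coeff p > 0"
  obtains R where "x < R" "poly p R > 0"
proof -
  obtain n where n: "\<forall>y\<ge>n. poly p y \<ge> lead_coeff p" using poly_pinfty_gt_lc[OF assms] by blast
  show ?thesis
  proof (rule that)
    show "x < max n (x + 1)" by simp
    show "poly p (max n (x + 1)) > 0" using n assms by (meson max.cobounded1 less_le_trans)
  qed
qed

(* The points 0 < (zeros of q) < R, with R beyond all zeros of p, carry alternating signs of p,
   so each of the degree p gaps between them contains exactly one zero of p. *)
lemma sorted_roots_separated_by_roots:
  fixes p q :: "real poly"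
  assumes deg_q: "degree q = N" and lc_q: "lead_coeff q = 1" and len_q: "length (sorted_roots q) = N"
    and pos_q: "\<forall>y\<in>set (sorted_roots q). 0 < y"
    and deg_p: "degree p = Suc N" and lc_p: "lead_coeff p = 1"
    and sign_0: "(-1) ^ Suc N * poly p 0 > 0"
    and sign_q: "\<And>i. i < N \<Longrightarrow> (-1) ^ (N - i) * poly p (sorted_roots q ! i) > 0"
  shows "length (sorted_roots p) = Suc N \<and> (\<forall>z\<in>set (sorted_roots p). 0 < z) \<and>
    (\<forall>i<Suc N. (-1) ^ (N - i) * poly q (sorted_roots p ! i) > 0)"
proof -
  define ys where "ys = sorted_roots q"
  obtain R where R: "Max (insert 0 (set ys)) < R" "poly p R > 0"
    using poly_pos_beyond[of p] lc_p by (metis zero_less_one)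
  have ys_below: "0 < y \<and> y < R" if "y \<in> set ys" for y
    using that R(1) pos_q by (auto simp: ys_def intro: le_less_trans[OF Max_ge])
  define ts where "ts = 0 # ys @ [R]"
  have "0 < R" using R(1) by (auto intro: le_less_trans[OF Max_ge])
  then have sorted_ts: "sorted_wrt (<) ts"
    using ys_below sorted_roots_strict_sorted[of q] by (simp add: ts_def ys_def sorted_wrt_append)
  have "(-1) ^ (Suc N - i) * poly p (ts ! i) > 0" if "i \<le> Suc N" for i
  proof (cases i)
    case 0
    then show ?thesis using sign_0 by (simp add: ts_def)
  next
    case (Suc j)
    then show ?thesis
      using sign_q[of j] R(2) len_q that by (cases "j < N") (simp_all add: ts_def ys_def nth_append)
  qed
  then have zs: "length (sorted_roots p) = Suc N"
    "\<And>i. i < Suc N \<Longrightarrow> ts ! i < sorted_roots p ! i \<and> sorted_roots p ! i < ts ! Suc i"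
    using sorted_roots_between_sign_changes[OF deg_p _ sorted_ts] len_q by (simp_all add: ts_def ys_def)
  have "0 \<le> ts ! i" if "i < Suc N" for i
    using that ys_below[of "ys ! (i - 1)"] len_q by (cases i) (auto simp: ts_def ys_def nth_append)
  then have "0 < sorted_roots p ! i" if "i < Suc N" for i
    using zs(2)[OF that] that by (meson le_less_trans)
  then have "\<forall>z\<in>set (sorted_roots p). 0 < z" by (auto simp: in_set_conv_nth zs(1))
  moreover have "(-1) ^ (N - i) * poly q (sorted_roots p ! i) > 0" if "i < Suc N" for i
  proof (rule sign_poly_between_roots[OF lc_q, unfolded deg_q])
    show "length (sorted_roots q) = N" "i \<le> N" using len_q that by simp_all
    show "sorted_roots q ! (i - 1) < sorted_roots p ! i" if "0 < i"
      using zs(2)[of i] \<open>i < Suc N\<close> \<open>0 < i\<close> len_q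
      by (cases i) (simp_all add: ts_def ys_def nth_append)
    show "sorted_roots p ! i < sorted_roots q ! i" if "i < N"
      using zs(2)[of i] \<open>i < N\<close> len_q by (simp add: ts_def ys_def nth_append)
  qed
  ultimately show ?thesis using zs(1) by blast
qed

lemma three_term_recurrence_roots:
  fixes P :: "nat \<Rightarrow> real poly" and a l :: "nat \<Rightarrow> real"
  assumes deg: "\<And>n. degree (P n) = n" and monic: "\<And>n. lead_coeff (P n) = 1"
    and rec: "\<And>n x. poly (P (Suc (Suc n))) x = (x - a n) * poly (P (Suc n)) x - l n * poly (P n) x"
    and l_pos: "\<And>n. l n > 0"
    and sign_0: "\<And>n. (-1) ^ n * poly (P n) 0 > 0"
  shows "length (sorted_roots (P (Suc n))) = Suc n \<and> (\<forall>z\<in>set (sorted_roots (P (Suc n))). 0 < z) \<and>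
    (\<forall>i<Suc n. (-1) ^ (n - i) * poly (P n) (sorted_roots (P (Suc n)) ! i) > 0)"
proof (induction n)
  case 0
  have "P 0 = 1" using deg[of 0] monic[of 0] by (auto elim: degree_eq_zeroE)
  then show ?case
    using sorted_roots_separated_by_roots[OF deg monic _ _ deg monic sign_0, of 0]
    by (simp add: sorted_roots_def)
next
  case (Suc n)
  define ys where "ys = sorted_roots (P (Suc n))"
  have "(-1) ^ (Suc n - i) * poly (P (Suc (Suc n))) (ys ! i) > 0" if "i < Suc n" for i
  proof -
    have IH: "length ys = Suc n" "(-1) ^ (n - i) * poly (P n) (ys ! i) > 0"
      using Suc.IH that by (simp_all add: ys_def)
    then have "ys ! i \<in> set ys" using that by simp
    then have "poly (P (Suc n)) (ys ! i) = 0"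
      using set_sorted_roots[of "P (Suc n)"] monic[of "Suc n"] by (force simp: ys_def)
    then have "(-1) ^ (Suc n - i) * poly (P (Suc (Suc n))) (ys ! i)
        = l n * ((-1) ^ (n - i) * poly (P n) (ys ! i))"
      using that by (simp add: rec Suc_diff_le)
    then show ?thesis using l_pos[of n] IH(2) by simp
  qed
  with Suc.IH show ?case
    using sorted_roots_separated_by_roots[OF deg monic _ _ deg monic sign_0, of "Suc n"]
    unfolding ys_def by blast
qed

subsection \<open>Expansion in the basis (-x)_k\<close>

(* meixner_coeff n b (c / (c - 1)) k is the coefficient of (-x)_k in M_n(x;b,c): with
   w = c/(c-1) one has 1 - 1/c = 1/w. *)
definition meixner_coeff :: "nat \<Rightarrow> real \<Rightarrow> real \<Rightarrow> nat \<Rightarrow> real" where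
  "meixner_coeff n b w k =
     w ^ n * pochhammer b n * pochhammer (- real n) k / (w ^ k * pochhammer b k * fact k)"

lemma meixner_coeff_eq_0: "n < k \<Longrightarrow> meixner_coeff n b w k = 0"
  by (auto simp: meixner_coeff_def pochhammer_eq_0_iff)

lemma meixner_eq_sum_coeff:
  assumes "c \<noteq> 0" "c \<noteq> 1" "n \<le> N"
  shows "meixner n b c x = (\<Sum>k\<le>N. meixner_coeff n b (c / (c - 1)) k * pochhammer (- x) k)"
proof -
  have "(1 - 1 / c) ^ k = 1 / (c / (c - 1)) ^ k" for k
    using assms(1,2) by (simp add: field_simps power_divide)
  then have "meixner n b c x = (\<Sum>k\<le>n. meixner_coeff n b (c / (c - 1)) k * pochhammer (- x) k)"
    unfolding meixner_def meixner_coeff_def atLeast0AtMost sum_distrib_left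
    by (intro sum.cong) simp_all
  also have "\<dots> = (\<Sum>k\<le>N. meixner_coeff n b (c / (c - 1)) k * pochhammer (- x) k)"
    using assms(3) by (intro sum.mono_neutral_left) (auto simp: meixner_coeff_eq_0)
  finally show ?thesis .
qed

lemma meixner_at_0: "meixner n b c 0 = (c / (c - 1)) ^ n * pochhammer b n"
proof -
  have "meixner n b c 0 = (c / (c - 1)) ^ n * pochhammer b n *
      (\<Sum>k\<in>{0}. pochhammer (- real n) k * pochhammer (- 0) k * (1 - 1 / c) ^ k / (pochhammer b k * fact k))"
    unfolding meixner_def by (intro arg_cong2[where f = "(*)"] refl sum.mono_neutral_right)
      (auto simp: pochhammer_0_left)
  then show ?thesis by simp
qed

lemma meixner_coeff_recurrence:
  fixes b w :: real and n k :: nat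
  assumes b: "\<And>j::nat. b \<noteq> - of_nat j" and w: "w \<noteq> 0"
  shows "meixner_coeff (n + 2) b w k =
           (real k - (real n + 1) + (2 * real n + 2 + b) * w) * meixner_coeff (n + 1) b w k
           - (if k = 0 then 0 else meixner_coeff (n + 1) b w (k - 1))
           + (real n + 1) * (real n + b) * w * (1 - w) * meixner_coeff n b w k"
proof -
  have pb: "pochhammer b i \<noteq> 0" for i using b by (auto simp: pochhammer_eq_0_iff)
  have bi: "b + real i \<noteq> 0" for i using b[of i] by (auto simp: algebra_simps)
  have pb2: "pochhammer b (n + 2) = pochhammer b n * (b + n) * (b + n + 1)"
    and pb1: "pochhammer b (n + 1) = pochhammer b n * (b + n)"
    by (simp_all add: pochhammer_Suc numeral_2_eq_2 algebra_simps)
  show ?thesis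
  proof (cases k)
    case 0
    then show ?thesis using w pb bi
      unfolding meixner_coeff_def pb2 pb1 by (simp add: field_simps)
  next
    case (Suc j)
    define X where "X = pochhammer (- real (n + 1)) j"
    have X2: "pochhammer (- real (n + 2)) (Suc j) = - (real n + 2) * X"
      unfolding X_def by (simp add: pochhammer_rec numeral_2_eq_2 algebra_simps)
    have X1: "pochhammer (- real (n + 1)) (Suc j) = X * (real j - real n - 1)"
      unfolding X_def by (simp add: pochhammer_Suc algebra_simps)
    have X0: "pochhammer (- real n) (Suc j) = - X * (real j - real n - 1) * (real j - real n) / (real n + 1)"
    proof -
      have "- (real n + 1) * pochhammer (- real n) (Suc j) = pochhammer (- real (n + 1)) (Suc (Suc j))"
        by (subst pochhammer_rec) (simp add: algebra_simps)
      also have "\<dots> = X * (real j - real n - 1) * (real j - real n)"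
        unfolding X_def by (simp add: pochhammer_Suc algebra_simps)
      finally show ?thesis by (simp add: field_simps add_nonneg_pos)
    qed
    have "fact (Suc j) = (real j + 1) * (fact j :: real)" "real j + 1 \<noteq> 0" "real n + 1 \<noteq> 0"
      by simp_all
    then show ?thesis using w pb bi
      unfolding Suc diff_Suc_1 meixner_coeff_def pb2 pb1 X2 X1 X0 X_def[symmetric]
      by (simp add: pochhammer_Suc[of b] divide_simps del: fact_Suc) (simp add: algebra_simps)
  qed
qed

lemma meixner_coeff_contiguous:
  fixes b w :: real and n k :: nat
  assumes b: "\<And>j::nat. b \<noteq> - of_nat j" and w: "w \<noteq> 0"
  shows "meixner_coeff (Suc n) b w k =
           meixner_coeff (Suc n) (b + 1) w k - (real n + 1) * w * meixner_coeff n (b + 1) w k"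
proof -
  have b1: "b + 1 \<noteq> - of_nat j" for j using b[of "Suc j"] by (simp add: algebra_simps)
  have pb: "pochhammer b i \<noteq> 0" "pochhammer (b + 1) i \<noteq> 0" for i
    using b b1 by (auto simp: pochhammer_eq_0_iff)
  have bi: "b + real i \<noteq> 0" "b + real i + 1 \<noteq> 0" for i
    using b[of i] b[of "Suc i"] by (auto simp: algebra_simps)
  have "b \<noteq> 0" using b[of 0] by simp
  have shift: "pochhammer b (Suc i) = b * pochhammer (b + 1) i"
    "pochhammer (b + 1) (Suc i) = pochhammer (b + 1) i * (b + 1 + i)" for i
    by (rule pochhammer_rec, rule pochhammer_Suc)
  show ?thesis
  proof (cases k)
    case 0
    then show ?thesis using w pb bi
      unfolding meixner_coeff_def shift by (simp add: field_simps)
  next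
    case (Suc j)
    have P1: "pochhammer (- real (Suc n)) (Suc j) = - (real n + 1) * pochhammer (- real n) j"
      by (simp add: pochhammer_rec)
    have P0: "pochhammer (- real n) (Suc j) = pochhammer (- real n) j * (real j - real n)"
      by (simp add: pochhammer_Suc)
    have "fact (Suc j) = (real j + 1) * (fact j :: real)" "real j + 1 \<noteq> 0" by simp_all
    then show ?thesis using w pb bi
      unfolding Suc meixner_coeff_def shift P1 P0
      by (simp add: divide_simps \<open>b \<noteq> 0\<close> del: fact_Suc) (simp add: algebra_simps)
  qed
qed

(* x (-x)_k = k (-x)_k - (-x)_(k+1) *)
lemma mult_sum_pochhammer_neg:
  fixes C :: "nat \<Rightarrow> real"
  assumes "C (Suc N) = 0"
  shows "x * (\<Sum>k\<le>Suc N. C k * pochhammer (- x) k) =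
    (\<Sum>k\<le>Suc N. (real k * C k - (if k = 0 then 0 else C (k - 1))) * pochhammer (- x) k)"
proof -
  have "x * (\<Sum>k\<le>Suc N. C k * pochhammer (- x) k) =
      (\<Sum>k\<le>Suc N. real k * C k * pochhammer (- x) k) - (\<Sum>k\<le>Suc N. C k * pochhammer (- x) (Suc k))"
    by (simp add: sum_distrib_left sum_subtractf pochhammer_Suc algebra_simps)
  also have "(\<Sum>k\<le>Suc N. C k * pochhammer (- x) (Suc k)) = (\<Sum>k\<le>N. C k * pochhammer (- x) (Suc k))"
    using assms by simp
  also have "\<dots> = (\<Sum>k\<le>Suc N. (if k = 0 then 0 else C (k - 1)) * pochhammer (- x) k)"
    by (simp only: sum.atMost_Suc_shift) simp
  finally show ?thesis by (simp add: sum_subtractf left_diff_distrib)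
qed

lemma meixner_recurrence:
  fixes b c x :: real and n :: nat
  assumes b: "\<And>k::nat. b \<noteq> - of_nat k" and c: "c \<noteq> 0" "c \<noteq> 1"
  shows "meixner (n + 2) b c x =
    (x - (real n + 1 + (real n + 1 + b) * c) / (1 - c)) * meixner (n + 1) b c x
    - (real n + 1) * (real n + b) * c / (1 - c)^2 * meixner n b c x"
proof -
  define w where "w = c / (c - 1)"
  define a where "a = (real n + 1 + (real n + 1 + b) * c) / (1 - c)"
  define l where "l = (real n + 1) * (real n + b) * c / (1 - c)^2"
  define C where "C m = meixner_coeff m b w" for m
  define C' where "C' k = (if k = 0 then 0 else C (n + 1) (k - 1))" for k
  have M: "meixner m b c x = (\<Sum>k\<le>Suc (Suc n). C m k * pochhammer (- x) k)" if "m \<le> n + 2" for m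
    using meixner_eq_sum_coeff[OF c, of m "Suc (Suc n)"] that by (simp add: C_def w_def)
  have M2: "meixner (n + 2) b c x = (\<Sum>k\<le>Suc (Suc n). C (n + 2) k * pochhammer (- x) k)"
    and M1: "meixner (n + 1) b c x = (\<Sum>k\<le>Suc (Suc n). C (n + 1) k * pochhammer (- x) k)"
    and M0: "meixner n b c x = (\<Sum>k\<le>Suc (Suc n). C n k * pochhammer (- x) k)"
    by (rule M, simp)+
  have "w \<noteq> 0" using c by (simp add: w_def)
  have "1 - c \<noteq> 0" "c - 1 \<noteq> 0" using c by simp_all
  then have a_w: "a = real n + 1 - (2 * real n + 2 + b) * w"
    and l_w: "(real n + 1) * (real n + b) * w * (1 - w) = - l"
    by (simp_all add: a_def l_def w_def divide_simps power2_eq_square) (simp_all add: algebra_simps)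
  have coef: "C (n + 2) k = (real k - a) * C (n + 1) k - C' k - l * C n k" for k
    using meixner_coeff_recurrence[OF b \<open>w \<noteq> 0\<close>, of n k]
    unfolding C_def C'_def a_w l_w by (simp add: algebra_simps)
  have x_M: "x * meixner (n + 1) b c x = (\<Sum>k\<le>Suc (Suc n). (real k * C (n + 1) k - C' k) * pochhammer (- x) k)"
    unfolding M1 C'_def by (rule mult_sum_pochhammer_neg) (simp add: C_def meixner_coeff_eq_0)
  have "(x - a) * meixner (n + 1) b c x - l * meixner n b c x
      = (\<Sum>k\<le>Suc (Suc n). (real k * C (n + 1) k - C' k) * pochhammer (- x) k
          - a * (C (n + 1) k * pochhammer (- x) k) - l * (C n k * pochhammer (- x) k))"
    unfolding left_diff_distrib x_M unfolding M1 M0 by (simp only: sum_subtractf sum_distrib_left)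
  also have "\<dots> = (\<Sum>k\<le>Suc (Suc n). C (n + 2) k * pochhammer (- x) k)"
    unfolding coef by (intro sum.cong refl) (simp add: algebra_simps)
  finally show ?thesis by (simp only: M2 a_def l_def)
qed

lemma meixner_contiguous:
  fixes b c x :: real and n :: nat
  assumes b: "\<And>k::nat. b \<noteq> - of_nat k" and c: "c \<noteq> 0" "c \<noteq> 1"
  shows "meixner (Suc n) b c x = meixner (Suc n) (b + 1) c x + (real n + 1) * c / (1 - c) * meixner n (b + 1) c x"
proof -
  define w where "w = c / (c - 1)"
  have "w \<noteq> 0" using c by (simp add: w_def)
  have e: "(real n + 1) * c / (1 - c) = - (real n + 1) * w" using c by (simp add: w_def field_simps)
  have M: "meixner m b' c x = (\<Sum>k\<le>Suc n. meixner_coeff m b' w k * pochhammer (- x) k)"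
    if "m \<le> Suc n" for m b'
    using meixner_eq_sum_coeff[OF c that] by (simp add: w_def)
  have "meixner (Suc n) (b + 1) c x + (real n + 1) * c / (1 - c) * meixner n (b + 1) c x
      = (\<Sum>k\<le>Suc n. meixner_coeff (Suc n) (b + 1) w k * pochhammer (- x) k
          + - (real n + 1) * w * (meixner_coeff n (b + 1) w k * pochhammer (- x) k))"
    unfolding e M[OF order.refl] M[OF le_SucI[OF order.refl]]
    by (simp only: sum.distrib sum_distrib_left)
  also have "\<dots> = meixner (Suc n) b c x"
    unfolding M[OF order.refl] meixner_coeff_contiguous[OF b \<open>w \<noteq> 0\<close>, of n]
    by (intro sum.cong refl) (simp add: algebra_simps)
  finally show ?thesis ..
qed

subsection \<open>Meixner polynomials as polynomials\<close>

lemma poly_pochhammer: "poly (pochhammer p k) x = pochhammer (poly p x) k"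
  by (induction k) (simp_all add: pochhammer_Suc)

lemma
  shows degree_pochhammer_neg_var: "degree (pochhammer [:0, -1::real:] k) = k"
    and lead_coeff_pochhammer_neg_var: "lead_coeff (pochhammer [:0, -1::real:] k) = (-1) ^ k"
proof (induction k)
  case (Suc k)
  have step: "pochhammer [:0, -1::real:] (Suc k) = pochhammer [:0, -1:] k * [:of_nat k, -1:]"
    by (simp add: pochhammer_Suc of_nat_poly)
  have "pochhammer [:0, -1::real:] k \<noteq> 0" using Suc by auto
  then show "degree (pochhammer [:0, -1::real:] (Suc k)) = Suc k"
    unfolding step using Suc by (simp add: degree_mult_eq del: mult_pCons_right)
  show "lead_coeff (pochhammer [:0, -1::real:] (Suc k)) = (-1) ^ Suc k"
    unfolding step lead_coeff_mult using Suc by simp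
qed simp_all

definition meixner_poly :: "nat \<Rightarrow> real \<Rightarrow> real \<Rightarrow> real poly" where
  "meixner_poly n b c = (\<Sum>k\<le>n. smult (meixner_coeff n b (c / (c - 1)) k) (pochhammer [:0, -1:] k))"

lemma poly_meixner_poly:
  assumes "c \<noteq> 0" "c \<noteq> 1"
  shows "poly (meixner_poly n b c) x = meixner n b c x"
  using meixner_eq_sum_coeff[OF assms order.refl]
  by (simp add: meixner_poly_def poly_sum poly_pochhammer)

lemma
  assumes b: "\<And>k::nat. b \<noteq> - of_nat k" and c: "c \<noteq> 0" "c \<noteq> 1"
  shows degree_meixner_poly: "degree (meixner_poly n b c) = n"
    and lead_coeff_meixner_poly: "lead_coeff (meixner_poly n b c) = 1"
proof -
  define w where "w = c / (c - 1)"
  have coeff: "coeff (meixner_poly n b c) i = (\<Sum>k\<le>n. meixner_coeff n b w k * coeff (pochhammer [:0, -1:] k) i)" for i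
    by (simp add: meixner_poly_def coeff_sum w_def)
  have "coeff (meixner_poly n b c) i = 0" if "n < i" for i
    unfolding coeff using that by (intro sum.neutral) (auto intro!: coeff_eq_0 simp: degree_pochhammer_neg_var)
  then have "degree (meixner_poly n b c) \<le> n" by (intro degree_le) auto
  have "coeff (meixner_poly n b c) n = meixner_coeff n b w n * (-1) ^ n"
    unfolding coeff
    by (subst sum.remove[of _ n]) (auto intro!: sum.neutral coeff_eq_0
        simp: degree_pochhammer_neg_var lead_coeff_pochhammer_neg_var[of n, unfolded degree_pochhammer_neg_var])
  also have "\<dots> = 1"
  proof -
    have "pochhammer b n \<noteq> 0" using b by (auto simp: pochhammer_eq_0_iff)
    moreover have "w \<noteq> 0" using c by (simp add: w_def)
    moreover have "pochhammer (- real n) n = (-1) ^ n * fact n"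
      by (simp add: pochhammer_minus pochhammer_fact)
    ultimately show ?thesis by (simp add: meixner_coeff_def field_simps flip: power_mult_distrib)
  qed
  finally have "coeff (meixner_poly n b c) n = 1" .
  then show "degree (meixner_poly n b c) = n" "lead_coeff (meixner_poly n b c) = 1"
    using \<open>degree (meixner_poly n b c) \<le> n\<close> by (metis le_antisym le_degree one_neq_zero)+
qed

lemma zero_list_eq_sorted_roots:
  assumes "c \<noteq> 0" "c \<noteq> 1"
  shows "zero_list n b c = sorted_roots (meixner_poly n b c)"
  by (simp add: zero_list_def meixner_zeros_def sorted_roots_def poly_meixner_poly[OF assms])

lemma set_zero_list:
  assumes b: "\<And>k::nat. b \<noteq> - of_nat k" and c: "c \<noteq> 0" "c \<noteq> 1"
  shows "set (zero_list n b c) = {x. meixner n b c x = 0}"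
proof -
  have "meixner_poly n b c \<noteq> 0" using lead_coeff_meixner_poly[OF b c, of n] by auto
  then show ?thesis
    by (simp add: zero_list_eq_sorted_roots[OF c] set_sorted_roots poly_meixner_poly[OF c])
qed

lemma meixner_at_0_sign:
  assumes "0 < c" "c < 1" "pochhammer b n > 0"
  shows "(-1) ^ n * meixner n b c 0 > 0"
proof -
  have "(-1) ^ n * meixner n b c 0 = (c / (1 - c)) ^ n * pochhammer b n"
    using assms(2) by (simp add: meixner_at_0 field_simps flip: power_mult_distrib)
  then show ?thesis using assms by simp
qed

lemma zero_list_meixner_orthogonal:
  assumes b: "b > 0" and c: "0 < c" "c < 1"
  shows "length (zero_list (Suc n) b c) = Suc n \<and> (\<forall>z\<in>set (zero_list (Suc n) b c). 0 < z) \<and>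
    (\<forall>i<Suc n. (-1) ^ (n - i) * meixner n b c (zero_list (Suc n) b c ! i) > 0)"
proof -
  have b': "b \<noteq> - of_nat k" for k :: nat using b of_nat_0_le_iff[of k] by linarith
  have c': "c \<noteq> 0" "c \<noteq> 1" using c by simp_all
  define P where "P m = meixner_poly m b c" for m
  have "length (sorted_roots (P (Suc n))) = Suc n \<and> (\<forall>z\<in>set (sorted_roots (P (Suc n))). 0 < z) \<and>
    (\<forall>i<Suc n. (-1) ^ (n - i) * poly (P n) (sorted_roots (P (Suc n)) ! i) > 0)"
  proof (rule three_term_recurrence_roots)
    show "degree (P m) = m" "lead_coeff (P m) = 1" for m
      unfolding P_def by (rule degree_meixner_poly[OF b' c'], rule lead_coeff_meixner_poly[OF b' c'])
    show "poly (P (Suc (Suc m))) x = (x - (real m + 1 + (real m + 1 + b) * c) / (1 - c)) * poly (P (Suc m)) x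
        - (real m + 1) * (real m + b) * c / (1 - c)^2 * poly (P m) x" for m x
      using meixner_recurrence[OF b' c', of m x] by (simp add: P_def poly_meixner_poly[OF c'])
    show "(real m + 1) * (real m + b) * c / (1 - c)^2 > 0" for m
      using b c by (simp add: add_nonneg_pos)
    show "(-1) ^ m * poly (P m) 0 > 0" for m
      using meixner_at_0_sign[OF c pochhammer_pos[OF b]] by (simp add: P_def poly_meixner_poly[OF c'])
  qed
  then show ?thesis by (simp add: P_def zero_list_eq_sorted_roots[OF c'] poly_meixner_poly[OF c'])
qed

(* Two contiguous steps beta -> beta+1 -> beta+2, then the recurrence at the zero y eliminates
   M_n(y;beta+2,c). *)
lemma meixner_at_root:
  fixes \<beta> c y :: real and n :: nat
  assumes \<beta>: "\<And>k::nat. \<beta> \<noteq> - of_nat k" and c: "c \<noteq> 0" "c \<noteq> 1"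
    and root: "meixner (n + 2) (\<beta> + 2) c y = 0"
  shows "(real n + \<beta> + 2) * meixner (n + 2) \<beta> c y
    = (real n + 2) * c * (y - A_n \<beta> c (real (n + 2))) * meixner (n + 1) (\<beta> + 2) c y"
proof -
  have \<beta>1: "\<beta> + 1 \<noteq> - of_nat k" and \<beta>2: "\<beta> + 2 \<noteq> - of_nat k" for k :: nat
    using \<beta>[of "Suc k"] \<beta>[of "Suc (Suc k)"] by (simp_all add: algebra_simps)
  define M1 where "M1 = meixner (n + 1) (\<beta> + 2) c y"
  define M0 where "M0 = meixner n (\<beta> + 2) c y"
  define e where "e = (real n + 2) * c / (1 - c)"
  define a where "a = (real n + 1 + (real n + 1 + (\<beta> + 2)) * c) / (1 - c)"
  define l where "l = (real n + 1) * (real n + (\<beta> + 2)) * c / (1 - c)^2"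
  have "meixner (n + 2) \<beta> c y = meixner (n + 2) (\<beta> + 1) c y + e * meixner (n + 1) (\<beta> + 1) c y"
    using meixner_contiguous[OF \<beta> c, of "n + 1" y] by (simp add: e_def algebra_simps)
  also have "meixner (n + 2) (\<beta> + 1) c y = e * M1"
    using meixner_contiguous[OF \<beta>1 c, of "n + 1" y] root by (simp add: e_def M1_def algebra_simps)
  also have "meixner (n + 1) (\<beta> + 1) c y = M1 + (real n + 1) * c / (1 - c) * M0"
    using meixner_contiguous[OF \<beta>1 c, of n y] by (simp add: M1_def M0_def algebra_simps)
  finally have P: "meixner (n + 2) \<beta> c y = e * (2 * M1 + (real n + 1) * c / (1 - c) * M0)"
    by (simp add: algebra_simps)
  have "l * M0 = (y - a) * M1"
    using meixner_recurrence[OF \<beta>2 c, of n y] root by (simp add: M0_def M1_def a_def l_def)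
  have "1 - c \<noteq> 0" "c - 1 \<noteq> 0" using c by simp_all
  then have "(real n + \<beta> + 2) * meixner (n + 2) \<beta> c y = e * (2 * (real n + \<beta> + 2) * M1 + (1 - c) * (l * M0))"
    unfolding P l_def by (simp add: divide_simps power2_eq_square; simp add: algebra_simps)
  also have "\<dots> = e * (2 * (real n + \<beta> + 2) + (1 - c) * (y - a)) * M1"
    unfolding \<open>l * M0 = (y - a) * M1\<close> by (simp add: algebra_simps)
  also have "\<dots> = (real n + 2) * c * (y - A_n \<beta> c (real (n + 2))) * M1"
    using \<open>1 - c \<noteq> 0\<close> \<open>c - 1 \<noteq> 0\<close>
    by (simp add: e_def a_def A_n_def divide_simps; simp add: algebra_simps)
  finally show ?thesis by (simp add: M1_def)
qed

lemma neq_neg_of_nat_if_between: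
  fixes \<beta> :: real
  assumes "-2 < \<beta>" "\<beta> < -1"
  shows "\<beta> \<noteq> - of_nat k"
proof -
  have "k = 0 \<or> k = 1 \<or> (2::real) \<le> of_nat k" by (cases k) auto
  then show ?thesis using assms by auto
qed

lemma sign_meixner_at_shifted_zeros:
  fixes \<beta> c :: real and n i :: nat
  assumes \<beta>: "-2 < \<beta>" "\<beta> < -1" and c: "0 < c" "c < 1" and i: "i < n + 2"
  defines "y \<equiv> zero_list (n + 2) (\<beta> + 2) c ! i"
  shows "(-1) ^ (n + 1 - i) * meixner (n + 2) \<beta> c y > 0 \<longleftrightarrow> A_n \<beta> c (real (n + 2)) < y"
proof -
  have \<beta>': "\<beta> \<noteq> - of_nat k" for k :: nat using neq_neg_of_nat_if_between[OF \<beta>] .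
  have \<beta>2: "\<beta> + 2 \<noteq> - of_nat k" for k :: nat using \<beta>'[of "k + 2"] by (simp add: algebra_simps)
  have c': "c \<noteq> 0" "c \<noteq> 1" using c by simp_all
  have zeros: "length (zero_list (n + 2) (\<beta> + 2) c) = n + 2"
    "(-1) ^ (n + 1 - i) * meixner (n + 1) (\<beta> + 2) c y > 0"
    using zero_list_meixner_orthogonal[of "\<beta> + 2" c "Suc n"] \<beta> c i by (simp_all add: y_def)
  then have "y \<in> set (zero_list (n + 2) (\<beta> + 2) c)" using i by (simp add: y_def)
  then have "meixner (n + 2) (\<beta> + 2) c y = 0" using set_zero_list[OF \<beta>2 c'] by blast
  from meixner_at_root[OF \<beta>' c' this]
  have E: "(real n + \<beta> + 2) * ((-1) ^ (n + 1 - i) * meixner (n + 2) \<beta> c y)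
    = ((real n + 2) * c) * (y - A_n \<beta> c (real (n + 2))) * ((-1) ^ (n + 1 - i) * meixner (n + 1) (\<beta> + 2) c y)"
    (is "?L * ?X = ?K * ?d * ?Y")
    by (metis mult.left_commute)
  have pos_scale: "0 < p \<Longrightarrow> 0 < p * t \<longleftrightarrow> 0 < t" for p t :: real
    by (simp add: zero_less_mult_iff)
  have "?L > 0" using \<beta> by simp
  have "?K * ?Y > 0" using mult_pos_pos[OF _ zeros(2), of ?K] c by simp
  have "?X > 0 \<longleftrightarrow> ?L * ?X > 0" using pos_scale[OF \<open>?L > 0\<close>] by simp
  also have "\<dots> \<longleftrightarrow> (?K * ?Y) * ?d > 0" unfolding E by (simp only: mult_ac)
  also have "\<dots> \<longleftrightarrow> ?d > 0" by (rule pos_scale) fact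
  finally show ?thesis by simp
qed

lemma meixner_interlace_iff:
  fixes \<beta> c :: real and n :: nat
  assumes \<beta>: "-2 < \<beta>" "\<beta> < -1" and c: "0 < c" "c < 1"
  shows "interlace (n + 2) (zero_list (n + 2) \<beta> c) (zero_list (n + 2) (\<beta> + 2) c)
    \<longleftrightarrow> A_n \<beta> c (real (n + 2)) < zero_list (n + 2) (\<beta> + 2) c ! 0"
proof -
  define xs where "xs = zero_list (n + 2) \<beta> c"
  define ys where "ys = zero_list (n + 2) (\<beta> + 2) c"
  define A where "A = A_n \<beta> c (real (n + 2))"
  define P where "P = meixner_poly (n + 2) \<beta> c"
  have \<beta>': "\<beta> \<noteq> - of_nat k" for k :: nat using neq_neg_of_nat_if_between[OF \<beta>] .
  have c': "c \<noteq> 0" "c \<noteq> 1" using c by simp_all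
  have deg_P: "degree P = n + 2" and lc_P: "lead_coeff P = 1"
    unfolding P_def by (rule degree_meixner_poly[OF \<beta>' c'], rule lead_coeff_meixner_poly[OF \<beta>' c'])
  have xs_P: "xs = sorted_roots P" and poly_P: "poly P x = meixner (n + 2) \<beta> c x" for x
    by (simp_all add: xs_def P_def zero_list_eq_sorted_roots[OF c'] poly_meixner_poly[OF c'])
  have len_ys: "length ys = n + 2" and ys_pos: "\<forall>y\<in>set ys. 0 < y"
    using zero_list_meixner_orthogonal[of "\<beta> + 2" c "Suc n"] \<beta> c by (simp_all add: ys_def)
  have sorted_ys: "sorted_wrt (<) ys"
    by (simp add: ys_def zero_list_eq_sorted_roots[OF c'] sorted_roots_strict_sorted)
  have sign_iff: "(-1) ^ (n + 1 - i) * poly P (ys ! i) > 0 \<longleftrightarrow> A < ys ! i" if "i < n + 2" for i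
    using sign_meixner_at_shifted_zeros[OF \<beta> c that] by (simp add: poly_P A_def ys_def)
  show ?thesis
    unfolding xs_def[symmetric] ys_def[symmetric] A_def[symmetric]
  proof
    assume "interlace (n + 2) xs ys"
    then have "length (sorted_roots P) = degree P" "sorted_roots P ! 0 < ys ! 0"
      "ys ! 0 < sorted_roots P ! 1"
      by (simp_all add: interlace_def xs_P deg_P)
    then have "(-1) ^ (n + 1) * poly P (ys ! 0) > 0"
      using sign_poly_between_roots[OF lc_P, of 1 "ys ! 0"] by (simp add: deg_P)
    then show "A < ys ! 0" using sign_iff[of 0] by simp
  next
    assume "A < ys ! 0"
    define ts where "ts = 0 # ys"
    have "sorted_wrt (<) ts" using sorted_ys ys_pos by (simp add: ts_def)
    moreover have "(-1) ^ (n + 2 - i) * poly P (ts ! i) > 0" if "i \<le> n + 2" for i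
    proof (cases i)
      case 0
      have "pochhammer \<beta> (n + 2) = \<beta> * (\<beta> + 1) * pochhammer (\<beta> + 2) n"
        by (simp add: pochhammer_rec numeral_2_eq_2 algebra_simps)
      then have "pochhammer \<beta> (n + 2) > 0"
        using \<beta> pochhammer_pos[of "\<beta> + 2" n] by (simp add: mult_neg_neg)
      from meixner_at_0_sign[OF c this] show ?thesis using 0 by (simp add: ts_def poly_P)
    next
      case (Suc j)
      then have "ys ! 0 \<le> ys ! j"
        using sorted_ys len_ys that by (simp add: strict_sorted_iff sorted_nth_mono)
      then show ?thesis using sign_iff[of j] \<open>A < ys ! 0\<close> Suc that by (simp add: ts_def)
    qed
    ultimately have "length xs = n + 2" "\<And>i. i < n + 2 \<Longrightarrow> ts ! i < xs ! i \<and> xs ! i < ts ! Suc i"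
      using sorted_roots_between_sign_changes[OF deg_P, of ts] len_ys by (simp_all add: ts_def xs_P)
    then show "interlace (n + 2) xs ys"
      using len_ys by (fastforce simp: interlace_def ts_def)
  qed
qed

theorem theorem4p4:
  fixes \<beta> c :: real
  assumes "-2 < \<beta>" "\<beta> < -1" "0 < c" "c < 1"
  shows "(\<forall>n::nat. n \<ge> 3 \<longrightarrow> real n \<ge> \<beta> / (c - 1) - (\<beta> + 1) \<longrightarrow>
            A_n \<beta> c (real n) \<le> 0 \<and>
            interlace n (zero_list n \<beta> c) (zero_list n (\<beta> + 2) c))
       \<and> (\<forall>m1 m2 :: int.
            \<beta> / (c - 1) - (\<beta> + 2) < of_int m1 \<and> of_int m1 < \<beta> / (c - 1) - (\<beta> + 1) \<and>
            \<beta> / (c - 1) - (\<beta> + 2) < of_int m2 \<and> of_int m2 < \<beta> / (c - 1) - (\<beta> + 1)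
            \<longrightarrow> m1 = m2)
       \<and> (\<forall>m :: int.
            \<beta> / (c - 1) - (\<beta> + 2) < of_int m \<and> of_int m < \<beta> / (c - 1) - (\<beta> + 1)
            \<longrightarrow> 0 < A_n \<beta> c (of_int m) \<and> A_n \<beta> c (of_int m) < 1)
       \<and> (\<forall>n::nat. n \<ge> 3 \<longrightarrow>
            \<beta> / (c - 1) < real n \<and> real n < \<beta> / (c - 1) - (\<beta> + 1) \<longrightarrow>
            (interlace n (zero_list n \<beta> c) (zero_list n (\<beta> + 2) c)
               \<longleftrightarrow> A_n \<beta> c (real n) < zero_list n (\<beta> + 2) c ! 0))"
proof -
  have interlace_iff: "interlace n (zero_list n \<beta> c) (zero_list n (\<beta> + 2) c)
      \<longleftrightarrow> A_n \<beta> c (real n) < zero_list n (\<beta> + 2) c ! 0" if "n \<ge> 2" for n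
  proof -
    obtain m where "n = m + 2" using \<open>n \<ge> 2\<close> by (metis add.commute le_Suc_ex)
    then show ?thesis using meixner_interlace_iff[OF assms, of m] by simp
  qed
  have first_zero_pos: "0 < zero_list n (\<beta> + 2) c ! 0" if "n \<ge> 1" for n
    using zero_list_meixner_orthogonal[of "\<beta> + 2" c "n - 1"] assms that by simp
  show ?thesis
  proof (intro conjI; intro allI impI)
    fix n :: nat assume "n \<ge> 3" "real n \<ge> \<beta> / (c - 1) - (\<beta> + 1)"
    moreover from this have "A_n \<beta> c (real n) \<le> 0" by (simp add: A_n_def)
    ultimately show "A_n \<beta> c (real n) \<le> 0 \<and> interlace n (zero_list n \<beta> c) (zero_list n (\<beta> + 2) c)"
      using interlace_iff[of n] first_zero_pos[of n] by simp
  next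
    fix m1 m2 :: int
    assume "\<beta> / (c - 1) - (\<beta> + 2) < of_int m1 \<and> of_int m1 < \<beta> / (c - 1) - (\<beta> + 1) \<and>
      \<beta> / (c - 1) - (\<beta> + 2) < of_int m2 \<and> of_int m2 < \<beta> / (c - 1) - (\<beta> + 1)"
    then have "of_int (m1 - m2) < (1::real)" "of_int (m1 - m2) > (-1::real)" by auto
    then show "m1 = m2" by linarith
  next
    fix m :: int
    assume "\<beta> / (c - 1) - (\<beta> + 2) < of_int m \<and> of_int m < \<beta> / (c - 1) - (\<beta> + 1)"
    then show "0 < A_n \<beta> c (of_int m) \<and> A_n \<beta> c (of_int m) < 1" by (auto simp: A_n_def)
  next
    fix n :: nat assume "n \<ge> 3"
    then show "interlace n (zero_list n \<beta> c) (zero_list n (\<beta> + 2) c)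
        \<longleftrightarrow> A_n \<beta> c (real n) < zero_list n (\<beta> + 2) c ! 0"
      by (intro interlace_iff) simp
  qed
qed

end
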